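(* Let $\mathcal{G}=sl(2,\mathbb{R})$ be the real Lie algebra with basis $X_1,X_2,X_3$ and brackets $[X_1,X_2]=-X_3$, $[X_2,X_3]=X_1$, $[X_3,X_1]=X_2$ (Bianchi type $VIII$). Every real Manin triple $(\mathcal{D},\mathcal{G}',\tilde{\mathcal{G}}')$ with $\mathcal{G}'\cong\mathcal{G}$ is isomorphic to exactly one Manin triple $(\mathcal{D},\mathcal{G},\tilde{\mathcal{G}})$ in which $\tilde{\mathcal{G}}$, in the basis $\tilde X^1,\tilde X^2,\tilde X^3$ dual to $X_1,X_2,X_3$, has one of the following bracket structures: (a) (Bianchi $I$) all brackets zero; (b) (Bianchi $V$) (i) $[\tilde X^1,\tilde X^2]=-b\tilde X^2$, $[\tilde X^2,\tilde X^3]=0$, $[\tilde X^3,\tilde X^1]=b\tilde X^3$, $b>0$; (ii) $[\tilde X^1,\tilde X^2]=0$, $[\tilde X^2,\tilde X^3]=b\tilde X^2$, $[\tilde X^3,\tilde X^1]=-b\tilde X^1$, $b>0$; (iii) $[\tilde X^1,\tilde X^2]=\tilde X^2$, $[\tilde X^2,\tilde X^3]=\tilde X^2$, $[\tilde X^3,\tilde X^1]=-(\tilde X^1+\tilde X^3)$.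
   Context: A real Manin triple $(\mathcal{D},\mathcal{G},\tilde{\mathcal{G}})$ consists of a real Lie algebra $\mathcal{D}$ with a symmetric, ad-invariant, nondegenerate bilinear form $\langle\cdot,\cdot\rangle$, and two maximally isotropic Lie subalgebras $\mathcal{G},\tilde{\mathcal{G}}$ with $\mathcal{D}=\mathcal{G}\oplus\tilde{\mathcal{G}}$ as vector spaces; here $\dim\mathcal{D}=6$, $\dim\mathcal{G}=\dim\tilde{\mathcal{G}}=3$. Bases $X_i$ of $\mathcal{G}$ and $\tilde X^i$ of $\tilde{\mathcal{G}}$ are dual if $\langle X_i,X_j\rangle=0$, $\langle X_i,\tilde X^j\rangle=\delta_i^j$, $\langle\tilde X^i,\tilde X^j\rangle=0$. If $[X_i,X_j]=f_{ij}{}^kX_k$ and $[\tilde X^i,\tilde X^j]=\tilde f^{ij}{}_k\tilde X^k$, ad-invariance forces $[X_i,\tilde X^j]=f_{ki}{}^j\tilde X^k+\tilde f^{jk}{}_iX_k$, so the triple is determined by the brackets of $\mathcal{G}$ and $\tilde{\mathcal{G}}$ in dual bases. Two Manin triples are isomorphic if there is a Lie algebra isomorphism of the doubles preserving the bilinear forms and mapping first subalgebra to first subalgebra and second to second; equivalently, they are related by a change of basis $X_i'=X_kA^k{}_i$, $\tilde X'^j=(A^{-1})^j{}_k\tilde X^k$. Different values of the parameter $b$ give non-isomorphic triples. *)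

theory Defs
  imports Complex_Main "HOL-Library.Numeral_Type" "HOL-Library.Product_Plus" "HOL-Library.Function_Algebras"
begin

text \<open>Indices 0,1,2 of type 3 correspond to the paper's indices 1,2,3.
  A 3-dimensional real Lie bracket in a basis is given by structure constants
  c i j k, meaning [E_i, E_j] = sum_k c i j k E_k.\<close>

type_synonym sconst = "3 \<Rightarrow> 3 \<Rightarrow> 3 \<Rightarrow> real"
type_synonym vec3 = "3 \<Rightarrow> real"

definition v3 :: "real \<Rightarrow> real \<Rightarrow> real \<Rightarrow> vec3" where
  "v3 a b c = (\<lambda>k. if k = 0 then a else if k = 1 then b else c)"

definition brackets3 :: "vec3 \<Rightarrow> vec3 \<Rightarrow> vec3 \<Rightarrow> sconst" where
  "brackets3 b12 b23 b31 = (\<lambda>i j k.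
     if i = 0 \<and> j = 1 then b12 k else if i = 1 \<and> j = 0 then - b12 k
     else if i = 1 \<and> j = 2 then b23 k else if i = 2 \<and> j = 1 then - b23 k
     else if i = 2 \<and> j = 0 then b31 k else if i = 0 \<and> j = 2 then - b31 k
     else 0)"

definition sl2 :: sconst where
  "sl2 = brackets3 (v3 0 0 (-1)) (v3 1 0 0) (v3 0 1 0)"

text \<open>The Manin double D = G + G~, elements (x, xi) = sum x_i X_i + sum xi_i X~^i.
  [X_i,X_j] = f_ij^k X_k, [X~^i,X~^j] = ft^ij_k X~^k,
  [X_i,X~^j] = f_ki^j X~^k + ft^jk_i X_k.\<close>
definition dbl_bracket :: "sconst \<Rightarrow> sconst \<Rightarrow> vec3 \<times> vec3 \<Rightarrow> vec3 \<times> vec3 \<Rightarrow> vec3 \<times> vec3" where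
  "dbl_bracket f ft a b = (case a of (x, \<xi>) \<Rightarrow> case b of (y, \<eta>) \<Rightarrow>
     ((\<lambda>k. (\<Sum>i\<in>UNIV. \<Sum>j\<in>UNIV. x i * y j * f i j k)
          + (\<Sum>i\<in>UNIV. \<Sum>j\<in>UNIV. x i * \<eta> j * ft j k i)
          - (\<Sum>i\<in>UNIV. \<Sum>j\<in>UNIV. y i * \<xi> j * ft j k i)),
      (\<lambda>k. (\<Sum>i\<in>UNIV. \<Sum>j\<in>UNIV. \<xi> i * \<eta> j * ft i j k)
          + (\<Sum>i\<in>UNIV. \<Sum>j\<in>UNIV. x i * \<eta> j * f k i j)
          - (\<Sum>i\<in>UNIV. \<Sum>j\<in>UNIV. y i * \<xi> j * f k i j))))"

definition dbl_form :: "vec3 \<times> vec3 \<Rightarrow> vec3 \<times> vec3 \<Rightarrow> real" where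
  "dbl_form a b = (case a of (x, \<xi>) \<Rightarrow> case b of (y, \<eta>) \<Rightarrow>
     (\<Sum>i\<in>UNIV. x i * \<eta> i + \<xi> i * y i))"

text \<open>(f, ft) in dual bases define a Manin triple: the bracket on the double
  (bilinear by construction) is antisymmetric, satisfies Jacobi, and the form
  is ad-invariant. G and G~ are then isotropic subalgebras.\<close>
definition manin_triple :: "sconst \<Rightarrow> sconst \<Rightarrow> bool" where
  "manin_triple f ft \<longleftrightarrow>
     (\<forall>a b. dbl_bracket f ft a b = - dbl_bracket f ft b a) \<and>
     (\<forall>a b c. dbl_bracket f ft a (dbl_bracket f ft b c)
              + dbl_bracket f ft b (dbl_bracket f ft c a)
              + dbl_bracket f ft c (dbl_bracket f ft a b) = 0) \<and>
     (\<forall>a b c. dbl_form (dbl_bracket f ft a b) c = dbl_form a (dbl_bracket f ft b c))"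

definition inverse_pair :: "(3 \<Rightarrow> 3 \<Rightarrow> real) \<Rightarrow> (3 \<Rightarrow> 3 \<Rightarrow> real) \<Rightarrow> bool" where
  "inverse_pair A B \<longleftrightarrow>
     (\<forall>i j. (\<Sum>k\<in>UNIV. A i k * B k j) = (if i = j then 1 else 0)) \<and>
     (\<forall>i j. (\<Sum>k\<in>UNIV. B i k * A k j) = (if i = j then 1 else 0))"

text \<open>Change of basis X'_i = X_k A^k_i (A i j = A^i_j), B = A^{-1}:
  new structure constants of G and of the dual G~ (X~'^j = (A^{-1})^j_k X~^k).\<close>
definition trans_f :: "(3 \<Rightarrow> 3 \<Rightarrow> real) \<Rightarrow> (3 \<Rightarrow> 3 \<Rightarrow> real) \<Rightarrow> sconst \<Rightarrow> sconst" where
  "trans_f A B f = (\<lambda>i j n. \<Sum>k\<in>UNIV. \<Sum>l\<in>UNIV. \<Sum>m\<in>UNIV. A k i * A l j * f k l m * B n m)"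

definition trans_ft :: "(3 \<Rightarrow> 3 \<Rightarrow> real) \<Rightarrow> (3 \<Rightarrow> 3 \<Rightarrow> real) \<Rightarrow> sconst \<Rightarrow> sconst" where
  "trans_ft A B ft = (\<lambda>i j n. \<Sum>k\<in>UNIV. \<Sum>l\<in>UNIV. \<Sum>m\<in>UNIV. B i k * B j l * ft k l m * A m n)"

definition lie_iso :: "sconst \<Rightarrow> sconst \<Rightarrow> bool" where
  "lie_iso f g \<longleftrightarrow> (\<exists>A B. inverse_pair A B \<and> trans_f A B f = g)"

definition mt_iso :: "sconst \<Rightarrow> sconst \<Rightarrow> sconst \<Rightarrow> sconst \<Rightarrow> bool" where
  "mt_iso f ft g gt \<longleftrightarrow>
     (\<exists>A B. inverse_pair A B \<and> trans_f A B f = g \<and> trans_ft A B ft = gt)"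

definition bianchiI :: sconst where "bianchiI = (\<lambda>i j k. 0)"

definition bianchiV_i :: "real \<Rightarrow> sconst" where
  "bianchiV_i b = brackets3 (v3 0 (-b) 0) (v3 0 0 0) (v3 0 0 b)"

definition bianchiV_ii :: "real \<Rightarrow> sconst" where
  "bianchiV_ii b = brackets3 (v3 0 0 0) (v3 0 b 0) (v3 (-b) 0 0)"

definition bianchiV_iii :: sconst where
  "bianchiV_iii = brackets3 (v3 0 1 0) (v3 0 1 0) (v3 (-1) 0 (-1))"

definition canonical_dual :: "sconst \<Rightarrow> bool" where
  "canonical_dual ft \<longleftrightarrow> ft = bianchiI \<or> (\<exists>b>0. ft = bianchiV_i b)
     \<or> (\<exists>b>0. ft = bianchiV_ii b) \<or> ft = bianchiV_iii"

end

theory Submission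
  imports Defs
begin

text \<open>
  After a change of basis the first algebra is \<open>sl(2,\<real>)\<close> in the standard basis. The mixed
  Jacobi identities of the double say that the dual bracket is a 1-cocycle of \<open>sl(2,\<real>)\<close>;
  as this algebra is semisimple the cocycle is a coboundary, which in dimension 3 means
  \<open>[\<xi>, \<eta>] = \<xi>(p) \<eta> - \<eta>(p) \<xi>\<close> for a vector \<open>p\<close>. A change of basis by an automorphism \<open>A\<close>
  of \<open>sl(2,\<real>)\<close> replaces \<open>p\<close> by \<open>A\<^sup>-\<^sup>1 p\<close>. Rotations in the \<open>(X\<^sub>1, X\<^sub>2)\<close>-plane, boosts in the
  \<open>(X\<^sub>1, X\<^sub>3)\<close>-plane and \<open>diag(1, -1, -1)\<close> are automorphisms, and they bring \<open>p\<close> to one of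
  \<open>0\<close>, \<open>(-b, 0, 0)\<close>, \<open>(0, 0, -b)\<close> with \<open>b > 0\<close>, or \<open>(1, 0, -1)\<close>: the cases (a), (b)(i)-(iii).
  Conversely, automorphisms preserve the Killing form, which on \<open>p\<close> is
  \<open>2 (p\<^sub>1\<^sup>2 + p\<^sub>2\<^sup>2 - p\<^sub>3\<^sup>2)\<close>; this value and whether \<open>p = 0\<close> separate the normal forms.
\<close>

lemma index3_exhaust: "(i::3) = 0 \<or> i = 1 \<or> i = 2"
proof (induct i)
  case (of_int z)
  then have "z = 0 \<or> z = 1 \<or> z = 2" by fastforce
  then show ?case by auto
qed

lemma UNIV_index3: "(UNIV::3 set) = {0, 1, 2}"
  using index3_exhaust by auto

lemma sum_index3: "sum g (UNIV::3 set) = g 0 + g 1 + g 2"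
  unfolding UNIV_index3 by (simp add: ac_simps)

lemma all_index3: "(\<forall>i::3. P i) \<longleftrightarrow> P 0 \<and> P 1 \<and> P 2"
  by (metis index3_exhaust)

lemma v3_simps [simp]: "v3 a b c 0 = a" "v3 a b c 1 = b" "v3 a b c 2 = c"
  unfolding v3_def by simp_all

lemma v3_eta: "v3 (p 0) (p 1) (p 2) = p"
proof
  fix k show "v3 (p 0) (p 1) (p 2) k = p k"
    using index3_exhaust[of k] by (auto simp: v3_def)
qed

lemma v3_eq_iff: "v3 a b c = v3 a' b' c' \<longleftrightarrow> a = a' \<and> b = b' \<and> c = c'"
  by (metis v3_simps)

lemma v3_eq_0_iff [simp]: "v3 a b c = 0 \<longleftrightarrow> a = 0 \<and> b = 0 \<and> c = 0"
  by (metis v3_simps v3_eta zero_fun_def)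

lemma v3_zero [simp]: "v3 0 0 0 = 0"
  by simp

type_synonym mat3 = "3 \<Rightarrow> 3 \<Rightarrow> real"

definition mat_mul :: "mat3 \<Rightarrow> mat3 \<Rightarrow> mat3" where
  "mat_mul A B = (\<lambda>i j. \<Sum>k\<in>UNIV. A i k * B k j)"

definition mat_one :: mat3 where
  "mat_one = (\<lambda>i j. if i = j then 1 else 0)"

definition mat_transp :: "mat3 \<Rightarrow> mat3" where
  "mat_transp A = (\<lambda>i j. A j i)"

definition mat_vec :: "mat3 \<Rightarrow> vec3 \<Rightarrow> vec3" where
  "mat_vec A v = (\<lambda>i. \<Sum>k\<in>UNIV. A i k * v k)"

lemma mat_mul_assoc: "mat_mul (mat_mul A B) C = mat_mul A (mat_mul B C)"
  unfolding mat_mul_def by (intro ext) (simp add: sum_index3 algebra_simps)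

lemma mat_mul_one [simp]: "mat_mul mat_one A = A"
  unfolding mat_mul_def mat_one_def by (intro ext) (simp add: if_distrib[of "\<lambda>z. z * _"] cong: if_cong)

lemma mat_transp_mul: "mat_transp (mat_mul A B) = mat_mul (mat_transp B) (mat_transp A)"
  unfolding mat_transp_def mat_mul_def by (intro ext) (simp add: mult.commute)

lemma mat_transp_one [simp]: "mat_transp mat_one = mat_one"
  unfolding mat_transp_def mat_one_def by (auto simp: fun_eq_iff)

lemma mat_vec_mul: "mat_vec A (mat_vec B v) = mat_vec (mat_mul A B) v"
  unfolding mat_vec_def mat_mul_def by (intro ext) (simp add: sum_index3 algebra_simps)

lemma mat_vec_one [simp]: "mat_vec mat_one v = v"
  unfolding mat_vec_def mat_one_def by (intro ext) (simp add: if_distrib[of "\<lambda>z. z * _"] cong: if_cong)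

lemma mat_vec_zero [simp]: "mat_vec A 0 = 0"
  unfolding mat_vec_def by (simp add: fun_eq_iff)

lemma inverse_pair_iff: "inverse_pair A B \<longleftrightarrow> mat_mul A B = mat_one \<and> mat_mul B A = mat_one"
  unfolding inverse_pair_def mat_mul_def mat_one_def by (auto simp: fun_eq_iff)

lemma inverse_pair_sym: "inverse_pair A B \<Longrightarrow> inverse_pair B A"
  unfolding inverse_pair_def by blast

lemma inverse_pair_mul:
  "inverse_pair A1 B1 \<Longrightarrow> inverse_pair A2 B2 \<Longrightarrow> inverse_pair (mat_mul A1 A2) (mat_mul B2 B1)"
  unfolding inverse_pair_iff by (metis mat_mul_assoc mat_mul_one)

definition act1 :: "mat3 \<Rightarrow> sconst \<Rightarrow> sconst" where
  "act1 M f = (\<lambda>i j n. \<Sum>k\<in>UNIV. M k i * f k j n)"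

definition act2 :: "mat3 \<Rightarrow> sconst \<Rightarrow> sconst" where
  "act2 M f = (\<lambda>i j n. \<Sum>k\<in>UNIV. M k j * f i k n)"

definition act3 :: "mat3 \<Rightarrow> sconst \<Rightarrow> sconst" where
  "act3 M f = (\<lambda>i j n. \<Sum>k\<in>UNIV. M n k * f i j k)"

lemma trans_f_act: "trans_f A B f = act3 B (act2 A (act1 A f))"
  unfolding trans_f_def act1_def act2_def act3_def by (intro ext) (simp add: sum_index3 algebra_simps)

lemma trans_ft_eq_trans_f: "trans_ft A B = trans_f (mat_transp B) (mat_transp A)"
  unfolding trans_ft_def trans_f_def mat_transp_def by (intro ext) (simp add: mult_ac)

lemma act1_act2: "act1 M (act2 N f) = act2 N (act1 M f)"
  unfolding act1_def act2_def by (intro ext) (simp add: sum_index3 algebra_simps)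

lemma act1_act3: "act1 M (act3 N f) = act3 N (act1 M f)"
  unfolding act1_def act3_def by (intro ext) (simp add: sum_index3 algebra_simps)

lemma act2_act3: "act2 M (act3 N f) = act3 N (act2 M f)"
  unfolding act2_def act3_def by (intro ext) (simp add: sum_index3 algebra_simps)

lemma act1_mul: "act1 M2 (act1 M1 f) = act1 (mat_mul M1 M2) f"
  unfolding act1_def mat_mul_def by (intro ext) (simp add: sum_index3 algebra_simps)

lemma act2_mul: "act2 M2 (act2 M1 f) = act2 (mat_mul M1 M2) f"
  unfolding act2_def mat_mul_def by (intro ext) (simp add: sum_index3 algebra_simps)

lemma act3_mul: "act3 M2 (act3 M1 f) = act3 (mat_mul M2 M1) f"
  unfolding act3_def mat_mul_def by (intro ext) (simp add: sum_index3 algebra_simps)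

lemma act1_one: "act1 mat_one f = f"
  unfolding act1_def mat_one_def by (intro ext) (simp add: if_distrib[of "\<lambda>z. z * _"] cong: if_cong)

lemma act2_one: "act2 mat_one f = f"
  unfolding act2_def mat_one_def by (intro ext) (simp add: if_distrib[of "\<lambda>z. z * _"] cong: if_cong)

lemma act3_one: "act3 mat_one f = f"
  unfolding act3_def mat_one_def by (intro ext) (simp add: if_distrib[of "\<lambda>z. z * _"] cong: if_cong)

lemma trans_f_mul: "trans_f A2 B2 (trans_f A1 B1 f) = trans_f (mat_mul A1 A2) (mat_mul B2 B1) f"
  unfolding trans_f_act by (simp add: act1_act2 act1_act3 act2_act3 act1_mul act2_mul act3_mul)

lemma trans_f_one: "trans_f mat_one mat_one f = f"
  unfolding trans_f_act by (simp add: act1_one act2_one act3_one)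

lemma trans_ft_mul: "trans_ft A2 B2 (trans_ft A1 B1 f) = trans_ft (mat_mul A1 A2) (mat_mul B2 B1) f"
  unfolding trans_ft_eq_trans_f trans_f_mul mat_transp_mul ..

lemma trans_ft_one: "trans_ft mat_one mat_one f = f"
  unfolding trans_ft_eq_trans_f mat_transp_one trans_f_one ..

lemma mt_iso_refl: "mt_iso f ft f ft"
  unfolding mt_iso_def inverse_pair_iff using trans_f_one trans_ft_one mat_mul_one by blast

lemma mt_iso_trans: "mt_iso f ft g gt \<Longrightarrow> mt_iso g gt h ht \<Longrightarrow> mt_iso f ft h ht"
  unfolding mt_iso_def by (metis inverse_pair_mul trans_f_mul trans_ft_mul)

lemma mt_iso_sym: "mt_iso f ft g gt \<Longrightarrow> mt_iso g gt f ft"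
proof -
  assume "mt_iso f ft g gt"
  then obtain A B where AB: "inverse_pair A B" "trans_f A B f = g" "trans_ft A B ft = gt"
    unfolding mt_iso_def by blast
  then have "trans_f B A g = f" "trans_ft B A gt = ft"
    unfolding inverse_pair_iff by (auto simp: trans_f_mul trans_ft_mul trans_f_one trans_ft_one)
  then show ?thesis
    using inverse_pair_sym[OF AB(1)] unfolding mt_iso_def by blast
qed

definition dbl_map :: "mat3 \<Rightarrow> mat3 \<Rightarrow> vec3 \<times> vec3 \<Rightarrow> vec3 \<times> vec3" where
  "dbl_map A B a = (case a of (x, \<xi>) \<Rightarrow> (mat_vec A x, mat_vec (mat_transp B) \<xi>))"

lemma dbl_bracket_trans:
  "dbl_bracket (trans_f A B f) (trans_ft A B ft) a b
     = dbl_map B A (dbl_bracket f ft (dbl_map A B a) (dbl_map A B b))"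
proof -
  have G_bracket: "(\<Sum>i\<in>UNIV. \<Sum>j\<in>UNIV. x i * y j * trans_f A B f i j n)
    = (\<Sum>m\<in>UNIV. B n m * (\<Sum>i\<in>UNIV. \<Sum>j\<in>UNIV. mat_vec A x i * mat_vec A y j * f i j m))"
    for x y n unfolding trans_f_def mat_vec_def by (simp add: sum_index3 algebra_simps)
  have G_mixed: "(\<Sum>i\<in>UNIV. \<Sum>j\<in>UNIV. x i * \<eta> j * trans_ft A B ft j n i)
    = (\<Sum>m\<in>UNIV. B n m * (\<Sum>i\<in>UNIV. \<Sum>j\<in>UNIV. mat_vec A x i * mat_vec (mat_transp B) \<eta> j * ft j m i))"
    for x \<eta> n unfolding trans_ft_def mat_vec_def mat_transp_def by (simp add: sum_index3 algebra_simps)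
  have dual_bracket: "(\<Sum>i\<in>UNIV. \<Sum>j\<in>UNIV. \<xi> i * \<eta> j * trans_ft A B ft i j n)
    = (\<Sum>m\<in>UNIV. A m n * (\<Sum>i\<in>UNIV. \<Sum>j\<in>UNIV.
         mat_vec (mat_transp B) \<xi> i * mat_vec (mat_transp B) \<eta> j * ft i j m))"
    for \<xi> \<eta> n unfolding trans_ft_def mat_vec_def mat_transp_def by (simp add: sum_index3 algebra_simps)
  have dual_mixed: "(\<Sum>i\<in>UNIV. \<Sum>j\<in>UNIV. x i * \<eta> j * trans_f A B f n i j)
    = (\<Sum>m\<in>UNIV. A m n * (\<Sum>i\<in>UNIV. \<Sum>j\<in>UNIV. mat_vec A x i * mat_vec (mat_transp B) \<eta> j * f m i j))"
    for x \<eta> n unfolding trans_f_def mat_vec_def mat_transp_def by (simp add: sum_index3 algebra_simps)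
  show ?thesis
    by (cases a, cases b)
      (simp only: dbl_bracket_def dbl_map_def prod.case G_bracket G_mixed dual_bracket dual_mixed
        mat_vec_def mat_transp_def
        ring_distribs sum.distrib sum_subtractf)
qed

lemma dbl_map_inverse: "inverse_pair A B \<Longrightarrow> dbl_map A B (dbl_map B A a) = a"
  by (cases a) (simp add: dbl_map_def mat_vec_mul mat_transp_mul[symmetric] inverse_pair_iff)

lemma dbl_map_add: "dbl_map A B (a + b) = dbl_map A B a + dbl_map A B b"
  by (cases a, cases b) (simp add: dbl_map_def mat_vec_def plus_fun_def ring_distribs sum.distrib)

lemma dbl_map_uminus: "dbl_map A B (- a) = - dbl_map A B a"
  by (cases a) (simp add: dbl_map_def mat_vec_def fun_Compl_def sum_negf)

lemma dbl_map_zero: "dbl_map A B 0 = 0"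
  by (simp add: dbl_map_def mat_vec_def zero_fun_def zero_prod_def)

lemma dbl_form_map: "dbl_form (dbl_map B A a) b = dbl_form a (dbl_map A B b)"
  by (cases a, cases b) (simp add: dbl_map_def dbl_form_def mat_vec_def mat_transp_def sum_index3 algebra_simps)

lemma dbl_form_sym: "dbl_form a b = dbl_form b a"
  by (cases a, cases b) (simp add: dbl_form_def mult_ac add_ac)

lemma manin_triple_trans:
  assumes mt: "manin_triple f ft" and AB: "inverse_pair A B"
  shows "manin_triple (trans_f A B f) (trans_ft A B ft)"
proof -
  let ?b = "dbl_bracket f ft" and ?b' = "dbl_bracket (trans_f A B f) (trans_ft A B ft)"
  let ?p = "dbl_map A B" and ?q = "dbl_map B A"
  have antisym: "?b a b = - ?b b a"
    and jacobi: "?b a (?b b c) + ?b b (?b c a) + ?b c (?b a b) = 0"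
    and invariant: "dbl_form (?b a b) c = dbl_form a (?b b c)" for a b c
    using mt unfolding manin_triple_def by blast+
  have pq: "?p (?q v) = v" for v
    using dbl_map_inverse[OF AB] .
  have "?b' a b = - ?b' b a" for a b
    unfolding dbl_bracket_trans using antisym dbl_map_uminus by metis
  moreover have "?b' a (?b' b c) + ?b' b (?b' c a) + ?b' c (?b' a b) = 0" for a b c
  proof -
    have "?b' a (?b' b c) + ?b' b (?b' c a) + ?b' c (?b' a b)
      = ?q (?b (?p a) (?b (?p b) (?p c)) + ?b (?p b) (?b (?p c) (?p a)) + ?b (?p c) (?b (?p a) (?p b)))"
      unfolding dbl_bracket_trans pq dbl_map_add ..
    also have "\<dots> = 0"
      using jacobi dbl_map_zero by metis
    finally show ?thesis .
  qed
  moreover have "dbl_form (?b' a b) c = dbl_form a (?b' b c)" for a b c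
  proof -
    have "dbl_form (?b' a b) c = dbl_form (?b (?p a) (?p b)) (?p c)"
      unfolding dbl_bracket_trans dbl_form_map ..
    also have "\<dots> = dbl_form (?p a) (?b (?p b) (?p c))"
      using invariant .
    also have "\<dots> = dbl_form a (?b' b c)"
      unfolding dbl_bracket_trans using dbl_form_map dbl_form_sym by metis
    finally show ?thesis .
  qed
  ultimately show ?thesis
    unfolding manin_triple_def by blast
qed

definition killing :: "sconst \<Rightarrow> mat3" where
  "killing f = (\<lambda>i j. \<Sum>a\<in>UNIV. \<Sum>b\<in>UNIV. f i a b * f j b a)"

definition quad_form :: "mat3 \<Rightarrow> vec3 \<Rightarrow> real" where
  "quad_form K u = (\<Sum>i\<in>UNIV. \<Sum>j\<in>UNIV. K i j * u i * u j)"

lemma killing_act1: "killing (act1 M f) = mat_mul (mat_transp M) (mat_mul (killing f) M)"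
  unfolding killing_def act1_def mat_mul_def mat_transp_def
  by (intro ext) (simp add: sum_index3 algebra_simps)

lemma killing_act3_act2:
  assumes "mat_mul A B = mat_one"
  shows "killing (act3 B (act2 A f)) = killing f"
proof (intro ext)
  fix i j
  have "(\<Sum>a\<in>UNIV. act2 A f i a m * B a m') = (\<Sum>l\<in>UNIV. f i l m * mat_mul A B l m')" for i m m'
    unfolding act2_def mat_mul_def by (simp add: sum_index3 algebra_simps)
  then have contract: "(\<Sum>a\<in>UNIV. act2 A f i a m * B a m') = f i m' m" for i m m'
    unfolding assms mat_one_def by (simp add: if_distrib[of "\<lambda>z. _ * z"] cong: if_cong)
  have expand: "killing (act3 B g) i j
    = (\<Sum>m\<in>UNIV. \<Sum>m'\<in>UNIV. (\<Sum>a\<in>UNIV. g i a m * B a m') * (\<Sum>b\<in>UNIV. g j b m' * B b m))" for g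
    unfolding killing_def act3_def by (simp add: sum_index3 algebra_simps)
  have "killing (act3 B (act2 A f)) i j = (\<Sum>m\<in>UNIV. \<Sum>m'\<in>UNIV. f i m' m * f j m m')"
    by (simp only: expand contract)
  also have "\<dots> = killing f i j"
    unfolding killing_def by (rule sum.swap)
  finally show "killing (act3 B (act2 A f)) i j = killing f i j" .
qed

lemma quad_form_congruence:
  "quad_form (mat_mul (mat_transp A) (mat_mul K A)) u = quad_form K (mat_vec A u)"
  unfolding quad_form_def mat_mul_def mat_transp_def mat_vec_def by (simp add: sum_index3 algebra_simps)

lemma quad_form_killing_trans:
  assumes "inverse_pair A B"
  shows "quad_form (killing (trans_f A B f)) (mat_vec B u) = quad_form (killing f) u"
proof -
  have AB: "mat_mul A B = mat_one"
    using assms unfolding inverse_pair_iff by blast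
  have "killing (trans_f A B f) = mat_mul (mat_transp A) (mat_mul (killing f) A)"
    unfolding trans_f_act act1_act2[symmetric] act1_act3[symmetric] killing_act1 killing_act3_act2[OF AB] ..
  then show ?thesis
    by (simp add: quad_form_congruence mat_vec_mul AB)
qed

definition bianchiV :: "vec3 \<Rightarrow> sconst" where
  "bianchiV p = (\<lambda>i j k. p i * mat_one j k - p j * mat_one i k)"

lemma bianchiV_brackets3:
  "bianchiV (v3 a b c) = brackets3 (v3 (-b) a 0) (v3 0 (-c) b) (v3 c 0 (-a))"
  unfolding fun_eq_iff all_index3 by (simp add: bianchiV_def brackets3_def mat_one_def)

lemma bianchiV_inject: "bianchiV p = bianchiV q \<longleftrightarrow> p = q"
proof
  assume "bianchiV p = bianchiV q"
  then have "bianchiV p 0 1 1 = bianchiV q 0 1 1" "bianchiV p 1 2 2 = bianchiV q 1 2 2"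
    "bianchiV p 2 0 0 = bianchiV q 2 0 0"
    by simp_all
  then have "v3 (p 0) (p 1) (p 2) = v3 (q 0) (q 1) (q 2)"
    by (simp add: bianchiV_def mat_one_def)
  then show "p = q"
    unfolding v3_eta .
qed simp

lemma trans_ft_bianchiV:
  assumes "inverse_pair A B"
  shows "trans_ft A B (bianchiV p) = bianchiV (mat_vec B p)"
proof -
  have "trans_ft A B (\<lambda>i j k. p i * M j k - p j * M i k)
      = (\<lambda>i j n. mat_vec B p i * mat_mul B (mat_mul M A) j n
                  - mat_vec B p j * mat_mul B (mat_mul M A) i n)" for M
    unfolding trans_ft_def mat_vec_def mat_mul_def
    by (intro ext) (simp add: sum_index3 algebra_simps)
  from this[of mat_one] assms show ?thesis
    unfolding inverse_pair_iff bianchiV_def by simp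
qed

lemma manin_triple_dual_antisym:
  assumes "manin_triple f g"
  shows "g i j k = - g j i k"
proof -
  let ?e = "\<lambda>i k. if k = i then 1 else 0 :: real"
  have "snd (dbl_bracket f g (0, ?e i) (0, ?e j)) k = snd (- dbl_bracket f g (0, ?e j) (0, ?e i)) k"
    using assms unfolding manin_triple_def by metis
  then show ?thesis
    using index3_exhaust[of i] index3_exhaust[of j] by (auto simp: dbl_bracket_def sum_index3)
qed

lemma manin_triple_sl2_dual:
  assumes mt: "manin_triple sl2 g"
  shows "g = bianchiV (v3 (g 0 1 1) (g 1 2 2) (g 2 0 0))"
proof -
  let ?br = "dbl_bracket sl2 g" and ?e = "\<lambda>i k. if k = i then 1 else 0 :: real"
  have antisym: "g 1 0 k = - g 0 1 k" "g 2 1 k = - g 1 2 k" "g 0 2 k = - g 2 0 k" "g i i k = 0"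
    for i k
    using manin_triple_dual_antisym[OF mt, of 1 0 k] manin_triple_dual_antisym[OF mt, of 2 1 k]
      manin_triple_dual_antisym[OF mt, of 0 2 k] manin_triple_dual_antisym[OF mt, of i i k]
    by linarith+
  have jacobi: "fst (?br (?e a, 0) (?br (?e b, 0) (0, ?e c)) + ?br (?e b, 0) (?br (0, ?e c) (?e a, 0))
      + ?br (0, ?e c) (?br (?e a, 0) (?e b, 0))) k = 0" for a b c k
    using mt unfolding manin_triple_def by (metis fst_zero zero_fun_def)
  note evaluate = dbl_bracket_def sum_index3 sl2_def brackets3_def v3_def antisym
  have "g 0 1 0 + g 1 2 2 = 0" using jacobi[of 0 1 1 2] by (simp add: evaluate)
  moreover have "g 0 1 1 + g 2 0 2 = 0" using jacobi[of 0 1 2 0] by (simp add: evaluate)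
  moreover have "g 1 2 1 + g 2 0 0 = 0" using jacobi[of 1 2 0 2] by (simp add: evaluate)
  moreover have "g 2 0 1 + g 1 2 0 + g 0 1 2 = 0" using jacobi[of 0 1 0 1] by (simp add: evaluate)
  moreover have "g 1 2 0 - g 0 1 2 = g 2 0 1" using jacobi[of 0 2 0 2] by (simp add: evaluate)
  moreover have "g 2 0 1 - g 0 1 2 = g 1 2 0" using jacobi[of 1 2 1 2] by (simp add: evaluate)
  ultimately have "g 0 1 0 = - g 1 2 2" "g 0 1 2 = 0" "g 1 2 0 = 0" "g 1 2 1 = - g 2 0 0" "g 2 0 1 = 0"
    "g 2 0 2 = - g 0 1 1"
    by linarith+
  then show ?thesis
    unfolding fun_eq_iff all_index3
    by (simp add: bianchiV_def mat_one_def antisym)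
qed

definition lorentz_sq :: "vec3 \<Rightarrow> real" where
  "lorentz_sq p = (p 0)\<^sup>2 + (p 1)\<^sup>2 - (p 2)\<^sup>2"

lemma quad_form_killing_sl2: "quad_form (killing sl2) p = 2 * lorentz_sq p"
  by (simp add: quad_form_def killing_def lorentz_sq_def sum_index3 sl2_def brackets3_def
      power2_eq_square)

lemma lorentz_sq_sl2_aut:
  assumes "inverse_pair A B" and "trans_f A B sl2 = sl2"
  shows "lorentz_sq (mat_vec B p) = lorentz_sq p"
  using quad_form_killing_trans[OF assms(1), of sl2 p] unfolding assms(2) quad_form_killing_sl2
  by simp

lemma mt_iso_sl2_bianchiV:
  assumes "inverse_pair A B" and "trans_f A B sl2 = sl2"
  shows "mt_iso sl2 (bianchiV p) sl2 (bianchiV (mat_vec B p))"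
  using assms trans_ft_bianchiV unfolding mt_iso_def by blast

lemma mt_iso_sl2_bianchiV_invariants:
  assumes "mt_iso sl2 (bianchiV p) sl2 (bianchiV q)"
  shows "lorentz_sq q = lorentz_sq p" and "p = 0 \<Longrightarrow> q = 0"
proof -
  obtain A B where AB: "inverse_pair A B" "trans_f A B sl2 = sl2"
    and "trans_ft A B (bianchiV p) = bianchiV q"
    using assms unfolding mt_iso_def by blast
  then have q: "q = mat_vec B p"
    by (simp add: trans_ft_bianchiV bianchiV_inject)
  show "lorentz_sq q = lorentz_sq p"
    unfolding q using lorentz_sq_sl2_aut[OF AB] .
  show "p = 0 \<Longrightarrow> q = 0"
    unfolding q by simp
qed

definition mat_of_rows :: "vec3 \<Rightarrow> vec3 \<Rightarrow> vec3 \<Rightarrow> mat3" where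
  "mat_of_rows r0 r1 r2 = (\<lambda>i. if i = 0 then r0 else if i = 1 then r1 else r2)"

lemma mat_vec_of_rows:
  "mat_vec (mat_of_rows (v3 a b c) (v3 d e f) (v3 g h k)) (v3 x y z)
     = v3 (a * x + b * y + c * z) (d * x + e * y + f * z) (g * x + h * y + k * z)"
  unfolding fun_eq_iff all_index3 by (simp add: mat_vec_def mat_of_rows_def sum_index3)

lemma mt_iso_sl2_rotation:
  assumes "c\<^sup>2 + s\<^sup>2 = 1"
  shows "mt_iso sl2 (bianchiV (v3 x y z)) sl2 (bianchiV (v3 (c * x + s * y) (c * y - s * x) z))"
proof -
  let ?A = "mat_of_rows (v3 c (-s) 0) (v3 s c 0) (v3 0 0 1)"
    and ?B = "mat_of_rows (v3 c s 0) (v3 (-s) c 0) (v3 0 0 1)"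
  have "inverse_pair ?A ?B"
    unfolding inverse_pair_def all_index3 using assms
    by (simp add: mat_of_rows_def sum_index3 power2_eq_square algebra_simps)
  moreover have "trans_f ?A ?B sl2 = sl2"
    unfolding fun_eq_iff all_index3 using assms
    by (simp add: trans_f_def mat_of_rows_def sum_index3 sl2_def brackets3_def power2_eq_square
        algebra_simps)
  ultimately have "mt_iso sl2 (bianchiV (v3 x y z)) sl2 (bianchiV (mat_vec ?B (v3 x y z)))"
    by (rule mt_iso_sl2_bianchiV)
  then show ?thesis
    by (simp add: mat_vec_of_rows algebra_simps)
qed

lemma mt_iso_sl2_boost:
  assumes "ch\<^sup>2 - sh\<^sup>2 = 1"
  shows "mt_iso sl2 (bianchiV (v3 x y z)) sl2 (bianchiV (v3 (ch * x - sh * z) y (ch * z - sh * x)))"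
proof -
  let ?A = "mat_of_rows (v3 ch 0 sh) (v3 0 1 0) (v3 sh 0 ch)"
    and ?B = "mat_of_rows (v3 ch 0 (-sh)) (v3 0 1 0) (v3 (-sh) 0 ch)"
  have sh2: "sh * sh = ch * ch - 1" "sh * (sh * u) = (ch * ch - 1) * u" for u
    using assms by (simp_all add: power2_eq_square algebra_simps)
  have "inverse_pair ?A ?B"
    unfolding inverse_pair_def all_index3
    by (simp add: mat_of_rows_def sum_index3 sh2 algebra_simps)
  moreover have "trans_f ?A ?B sl2 = sl2"
    unfolding fun_eq_iff all_index3
    by (simp add: trans_f_def mat_of_rows_def sum_index3 sl2_def brackets3_def sh2 algebra_simps)
  ultimately have "mt_iso sl2 (bianchiV (v3 x y z)) sl2 (bianchiV (mat_vec ?B (v3 x y z)))"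
    by (rule mt_iso_sl2_bianchiV)
  then show ?thesis
    by (simp add: mat_vec_of_rows algebra_simps)
qed

lemma mt_iso_sl2_flip: "mt_iso sl2 (bianchiV (v3 x y z)) sl2 (bianchiV (v3 x (- y) (- z)))"
proof -
  let ?A = "mat_of_rows (v3 1 0 0) (v3 0 (-1) 0) (v3 0 0 (-1))"
  have "inverse_pair ?A ?A"
    unfolding inverse_pair_def all_index3 by (simp add: mat_of_rows_def sum_index3)
  moreover have "trans_f ?A ?A sl2 = sl2"
    unfolding fun_eq_iff all_index3 by (simp add: trans_f_def mat_of_rows_def sum_index3 sl2_def brackets3_def)
  ultimately have "mt_iso sl2 (bianchiV (v3 x y z)) sl2 (bianchiV (mat_vec ?A (v3 x y z)))"
    by (rule mt_iso_sl2_bianchiV)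
  then show ?thesis
    by (simp add: mat_vec_of_rows)
qed

lemma rotation_to_axis:
  "\<exists>c s. c\<^sup>2 + s\<^sup>2 = 1 \<and> c * x + s * y = - sqrt (x\<^sup>2 + y\<^sup>2) \<and> c * y - s * x = 0"
proof (cases "x = 0 \<and> y = 0")
  case True
  then show ?thesis by (intro exI[of _ 1] exI[of _ 0]) simp
next
  case False
  define r where "r = sqrt (x\<^sup>2 + y\<^sup>2)"
  have "x\<^sup>2 + y\<^sup>2 > 0"
    using False by (simp add: sum_power2_gt_zero_iff)
  then have r: "r > 0" "r\<^sup>2 = x\<^sup>2 + y\<^sup>2"
    unfolding r_def by simp_all
  show ?thesis
  proof (intro exI conjI)
    show "(- x / r)\<^sup>2 + (- y / r)\<^sup>2 = 1"
      using r False by (simp add: power_divide add_divide_distrib[symmetric])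
    show "- x / r * x + - y / r * y = - sqrt (x\<^sup>2 + y\<^sup>2)"
      using r unfolding r_def[symmetric] by (simp add: field_simps power2_eq_square)
    show "- x / r * y - - y / r * x = 0"
      by (simp add: field_simps)
  qed
qed

lemma boost_to_axis:
  assumes "0 \<le> v" and "v < u"
  shows "\<exists>ch sh. ch\<^sup>2 - sh\<^sup>2 = 1 \<and> ch * u - sh * v = sqrt (u\<^sup>2 - v\<^sup>2) \<and> ch * v - sh * u = 0"
proof -
  define b where "b = sqrt (u\<^sup>2 - v\<^sup>2)"
  have "v\<^sup>2 < u\<^sup>2"
    using assms by (simp add: power_strict_mono)
  then have b: "b > 0" "b\<^sup>2 = u\<^sup>2 - v\<^sup>2"
    unfolding b_def by simp_all
  show ?thesis
  proof (intro exI conjI)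
    show "(u / b)\<^sup>2 - (v / b)\<^sup>2 = 1"
      using b \<open>v\<^sup>2 < u\<^sup>2\<close> by (simp add: power_divide diff_divide_distrib[symmetric])
    show "u / b * u - v / b * v = sqrt (u\<^sup>2 - v\<^sup>2)"
      using b unfolding b_def[symmetric] by (simp add: field_simps power2_eq_square)
    show "u / b * v - v / b * u = 0"
      by (simp add: field_simps)
  qed
qed

lemma boost_null:
  fixes r :: real
  assumes "r > 0"
  shows "\<exists>ch sh. ch\<^sup>2 - sh\<^sup>2 = 1 \<and> ch * r - sh * r = 1"
proof (intro exI conjI)
  show "((r + 1 / r) / 2)\<^sup>2 - ((r - 1 / r) / 2)\<^sup>2 = 1"
    using assms by (simp add: field_simps power2_eq_square)
  show "(r + 1 / r) / 2 * r - (r - 1 / r) / 2 * r = 1"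
    using assms by (simp add: field_simps)
qed

definition canonical_vec :: "vec3 \<Rightarrow> bool" where
  "canonical_vec p \<longleftrightarrow> p = 0 \<or> (\<exists>b>0. p = v3 (- b) 0 0) \<or> (\<exists>b>0. p = v3 0 0 (- b))
     \<or> p = v3 1 0 (- 1)"

lemma canonical_dual_iff: "canonical_dual ft \<longleftrightarrow> (\<exists>p. canonical_vec p \<and> ft = bianchiV p)"
proof -
  have "bianchiI = bianchiV 0"
    by (simp add: bianchiI_def bianchiV_def zero_fun_def)
  moreover have "bianchiV_i b = bianchiV (v3 (- b) 0 0)" "bianchiV_ii b = bianchiV (v3 0 0 (- b))"
    "bianchiV_iii = bianchiV (v3 1 0 (- 1))" for b
    by (simp_all add: bianchiV_brackets3 bianchiV_i_def bianchiV_ii_def bianchiV_iii_def)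
  ultimately show ?thesis
    unfolding canonical_dual_def canonical_vec_def by auto
qed

lemma canonical_vec_unique:
  assumes "canonical_vec p" and "canonical_vec q" and "lorentz_sq p = lorentz_sq q"
    and "p = 0 \<longleftrightarrow> q = 0"
  shows "p = q"
  using assms unfolding canonical_vec_def
  by (auto simp: lorentz_sq_def v3_eq_iff eq_neg_iff_add_eq_0 neg_eq_iff_add_eq_0)

lemma sl2_bianchiV_normal_form_axis:
  assumes "0 \<le> r" and "0 \<le> s"
  shows "\<exists>q. canonical_vec q \<and> mt_iso sl2 (bianchiV (v3 (- r) 0 (- s))) sl2 (bianchiV q)"
proof -
  consider "r = 0 \<and> s = 0" | "s < r" | "r < s" | "r = s \<and> 0 < r"
    using assms by linarith
  then show ?thesis
  proof cases
    case 1
    then show ?thesis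
      using mt_iso_refl by (auto simp: canonical_vec_def)
  next
    case 2
    define b where "b = sqrt (r\<^sup>2 - s\<^sup>2)"
    have "b > 0"
      using 2 assms unfolding b_def by (simp add: power_strict_mono)
    obtain ch sh where boost: "ch\<^sup>2 - sh\<^sup>2 = 1" and "ch * r - sh * s = b" "ch * s - sh * r = 0"
      using boost_to_axis[of s r] 2 assms unfolding b_def by blast
    then have "ch * - r - sh * - s = - b" "ch * - s - sh * - r = 0"
      by linarith+
    then have "mt_iso sl2 (bianchiV (v3 (- r) 0 (- s))) sl2 (bianchiV (v3 (- b) 0 0))"
      using mt_iso_sl2_boost[OF boost, of "- r" 0 "- s"] by simp
    then show ?thesis
      using \<open>b > 0\<close> unfolding canonical_vec_def by blast
  next
    case 3
    define b where "b = sqrt (s\<^sup>2 - r\<^sup>2)"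
    have "b > 0"
      using 3 assms unfolding b_def by (simp add: power_strict_mono)
    obtain ch sh where boost: "ch\<^sup>2 - sh\<^sup>2 = 1" and "ch * s - sh * r = b" "ch * r - sh * s = 0"
      using boost_to_axis[of r s] 3 assms unfolding b_def by blast
    then have "ch * - r - sh * - s = 0" "ch * - s - sh * - r = - b"
      by linarith+
    then have "mt_iso sl2 (bianchiV (v3 (- r) 0 (- s))) sl2 (bianchiV (v3 0 0 (- b)))"
      using mt_iso_sl2_boost[OF boost, of "- r" 0 "- s"] by simp
    then show ?thesis
      using \<open>b > 0\<close> unfolding canonical_vec_def by blast
  next
    case 4
    then obtain ch sh where "ch\<^sup>2 - sh\<^sup>2 = 1" "ch * r - sh * r = 1"
      using boost_null by blast
    then have "mt_iso sl2 (bianchiV (v3 (- r) 0 (- s))) sl2 (bianchiV (v3 (- 1) 0 (- 1)))"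
      using mt_iso_sl2_boost[of ch sh "- r" 0 "- r"] 4 by (simp add: algebra_simps)
    moreover have "mt_iso sl2 (bianchiV (v3 (- 1) 0 (- 1))) sl2 (bianchiV (v3 1 0 (- 1)))"
      using mt_iso_sl2_rotation[of "- 1" 0 "- 1" 0 "- 1"] by simp
    ultimately show ?thesis
      unfolding canonical_vec_def by (blast intro: mt_iso_trans)
  qed
qed

lemma sl2_bianchiV_normal_form: "\<exists>q. canonical_vec q \<and> mt_iso sl2 (bianchiV p) sl2 (bianchiV q)"
proof -
  define r where "r = sqrt ((p 0)\<^sup>2 + (p 1)\<^sup>2)"
  obtain c s where "c\<^sup>2 + s\<^sup>2 = 1" "c * p 0 + s * p 1 = - r" "c * p 1 - s * p 0 = 0"
    unfolding r_def using rotation_to_axis by blast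
  then have "mt_iso sl2 (bianchiV p) sl2 (bianchiV (v3 (- r) 0 (p 2)))"
    using mt_iso_sl2_rotation[of c s "p 0" "p 1" "p 2"] by (simp add: v3_eta)
  moreover have "mt_iso sl2 (bianchiV (v3 (- r) 0 (p 2))) sl2 (bianchiV (v3 (- r) 0 (- \<bar>p 2\<bar>)))"
    using mt_iso_sl2_flip[of "- r" 0 "p 2"] mt_iso_refl by (cases "p 2 \<ge> 0") simp_all
  moreover obtain q where "canonical_vec q" "mt_iso sl2 (bianchiV (v3 (- r) 0 (- \<bar>p 2\<bar>))) sl2 (bianchiV q)"
    using sl2_bianchiV_normal_form_axis[of r "\<bar>p 2\<bar>"] unfolding r_def by auto
  ultimately show ?thesis
    by (blast intro: mt_iso_trans)
qed

lemma canonical_dual_sl2_exists: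
  assumes "manin_triple sl2 g"
  shows "\<exists>ft. canonical_dual ft \<and> mt_iso sl2 g sl2 ft"
  using manin_triple_sl2_dual[OF assms] sl2_bianchiV_normal_form canonical_dual_iff by metis

lemma canonical_dual_sl2_unique:
  assumes "canonical_dual ft1" and "canonical_dual ft2" and "mt_iso sl2 ft1 sl2 ft2"
  shows "ft1 = ft2"
proof -
  obtain p q where p: "canonical_vec p" "ft1 = bianchiV p" and q: "canonical_vec q" "ft2 = bianchiV q"
    using assms(1,2) unfolding canonical_dual_iff by blast
  have iso: "mt_iso sl2 (bianchiV p) sl2 (bianchiV q)"
    using assms(3) p q by simp
  have "p = q"
  proof (rule canonical_vec_unique[OF p(1) q(1)])
    show "lorentz_sq p = lorentz_sq q"
      using mt_iso_sl2_bianchiV_invariants(1)[OF iso] by simp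
    show "p = 0 \<longleftrightarrow> q = 0"
      using mt_iso_sl2_bianchiV_invariants(2) iso mt_iso_sym by blast
  qed
  then show ?thesis
    using p q by simp
qed

theorem mainTheorem2:
  fixes f' ft' :: sconst
  assumes "manin_triple f' ft'"
    and "lie_iso f' sl2"
  shows "\<exists>!ft. canonical_dual ft \<and> mt_iso f' ft' sl2 ft"
proof -
  obtain A B where AB: "inverse_pair A B" and f': "trans_f A B f' = sl2"
    using assms(2) unfolding lie_iso_def by blast
  let ?g = "trans_ft A B ft'"
  have iso: "mt_iso f' ft' sl2 ?g"
    unfolding mt_iso_def using AB f' by blast
  have "manin_triple sl2 ?g"
    using manin_triple_trans[OF assms(1) AB] unfolding f' .
  then obtain ft where ft: "canonical_dual ft" "mt_iso sl2 ?g sl2 ft"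
    using canonical_dual_sl2_exists by blast
  show ?thesis
  proof (rule ex1I)
    show "canonical_dual ft \<and> mt_iso f' ft' sl2 ft"
      using ft mt_iso_trans[OF iso] by blast
  next
    fix ft2
    assume "canonical_dual ft2 \<and> mt_iso f' ft' sl2 ft2"
    then show "ft2 = ft"
      using canonical_dual_sl2_unique ft iso mt_iso_trans mt_iso_sym by meson
  qed
qed

end
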